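(* Let $n\ge1$ and let $\mathbf F$ be any family of subsets of $[n]$. Identify vertices of $Q_n$ with subsets of $[n]$. Let $G(\mathbf F)$ be the subgraph of $Q_n$ induced by $\mathbf X(\mathbf F)$ and $G'(\mathbf F)$ the subgraph induced by its complement $2^{[n]}\setminus \mathbf X(\mathbf F)$. Then $\Delta(G(\mathbf F))\le \max\{r(\mathbf F),t(\mathbf F)\}$ and $\Delta(G'(\mathbf F))\le\max\{r(\mathbf F),t(\mathbf F)\}$.
   Context: $[n]=\{1,\dots,n\}$; a subset $T\subseteq[n]$ is identified with the vertex $x\in\{0,1\}^n$ having $x_i=1$ iff $i\in T$, so two subsets are adjacent in $Q_n$ iff their symmetric difference has exactly one element. $\mathbf X(\mathbf F)=\{S\subseteq[n]: |S| \text{ even and } F\subseteq S \text{ for some } F\in\mathbf F\}\cup\{S\subseteq[n]: |S|\text{ odd and } F\not\subseteq S\text{ for all }F\in\mathbf F\}$. The rank $r(\mathbf F)$ is the largest cardinality of a member of $\mathbf F$. $t(\mathbf F)$ is the largest $t$ for which there exist $F_1,\dots,F_t\in\mathbf F$ and elements $x_1,\dots,x_t$ with $x_i\in F_j$ iff $i=j$ (for all $1\le i,j\le t$). $\Delta$ denotes maximum degree. *)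

theory Defs
  imports Main
begin

definition XF :: "nat \<Rightarrow> nat set set \<Rightarrow> nat set set" where
  "XF n F = {S. S \<subseteq> {1..n} \<and> even (card S) \<and> (\<exists>A\<in>F. A \<subseteq> S)}
          \<union> {S. S \<subseteq> {1..n} \<and> odd (card S) \<and> (\<forall>A\<in>F. \<not> A \<subseteq> S)}"

definition cube_adj :: "nat set \<Rightarrow> nat set \<Rightarrow> bool" where
  "cube_adj S T \<longleftrightarrow> card ((S - T) \<union> (T - S)) = 1"

definition ind_degree :: "nat set set \<Rightarrow> nat set \<Rightarrow> nat" where
  "ind_degree V S = card {T \<in> V. cube_adj S T}"

definition max_degree :: "nat set set \<Rightarrow> nat" where
  "max_degree V = Max (insert 0 (ind_degree V ` V))"

definition rank_fam :: "nat set set \<Rightarrow> nat" where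
  "rank_fam F = Max (insert 0 (card ` F))"

definition t_fam :: "nat set set \<Rightarrow> nat" where
  "t_fam F = Max {t. \<exists>Fs xs. (\<forall>i\<in>{1..t}. Fs i \<in> F) \<and>
                      (\<forall>i\<in>{1..t}. \<forall>j\<in>{1..t}. (xs i \<in> Fs j \<longleftrightarrow> i = j))}"

end

theory Submission
  imports Defs
begin

text \<open>Adjacent vertices have cardinalities of opposite parity, and both X(F) and its complement
are defined by comparing the parity of a set with membership in the up-set generated by F.
Hence along every edge of G(F) or G'(F) exactly one endpoint lies in the up-set.
A vertex S in the up-set, say containing A \<in> F, can then only lose an element of A,
so its degree is at most |A| \<le> r(F). A vertex S outside the up-set can only gain elements x
with some F_x \<in> F, F_x \<subseteq> S \<union> {x}; these x and F_x form a system with x \<in> F_y iff x = y,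
so its degree is at most t(F).\<close>

definition upset :: "'a set set \<Rightarrow> 'a set set" where
  "upset F = {S. \<exists>A\<in>F. A \<subseteq> S}"

definition t_system :: "nat set set \<Rightarrow> nat \<Rightarrow> bool" where
  "t_system F t \<longleftrightarrow> (\<exists>Fs xs. (\<forall>i\<in>{1..t}. Fs i \<in> F) \<and>
                      (\<forall>i\<in>{1..t}. \<forall>j\<in>{1..t}. (xs i \<in> Fs j \<longleftrightarrow> i = j)))"

lemma cube_adj_cases:
  assumes "cube_adj S T"
  obtains x where "x \<in> S" "T = S - {x}" | x where "x \<notin> S" "T = insert x S"
proof -
  from assms obtain x where x: "(S - T) \<union> (T - S) = {x}"
    unfolding cube_adj_def by (rule card_1_singletonE)
  then have "y \<in> T \<longleftrightarrow> (y \<in> S \<longleftrightarrow> y \<noteq> x)" for y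
    by (metis DiffI Diff_iff UnCI UnE singletonD singletonI)
  then show thesis
    using that by (cases "x \<in> S") blast+
qed

lemma cube_adj_even_card_iff:
  assumes "finite S" "cube_adj S T"
  shows "even (card T) \<longleftrightarrow> odd (card S)"
  using assms(2)
proof (cases rule: cube_adj_cases)
  case (1 x)
  with assms(1) have "card S = Suc (card T)"
    by (metis card_Suc_Diff1)
  then show ?thesis by simp
next
  case (2 x)
  then show ?thesis using assms(1) by simp
qed

lemma rank_fam_ge:
  assumes "finite F" "A \<in> F"
  shows "card A \<le> rank_fam F"
  using assms unfolding rank_fam_def by simp

lemma t_system_le_card_Union:
  assumes "finite (\<Union>F)" "t_system F t"
  shows "t \<le> card (\<Union>F)"
proof -
  from assms(2) obtain Fs xs where Fs: "\<forall>i\<in>{1..t}. Fs i \<in> F"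
    and xs: "\<forall>i\<in>{1..t}. \<forall>j\<in>{1..t}. (xs i \<in> Fs j \<longleftrightarrow> i = j)"
    unfolding t_system_def by blast
  have "inj_on xs {1..t}"
    using xs by (metis inj_onI)
  moreover have "xs ` {1..t} \<subseteq> \<Union>F"
    using Fs xs by blast
  ultimately show ?thesis
    using card_inj_on_le[OF _ _ assms(1)] by fastforce
qed

lemma t_fam_ge:
  assumes "finite (\<Union>F)" "t_system F t"
  shows "t \<le> t_fam F"
proof -
  have "{t. t_system F t} \<subseteq> {..card (\<Union>F)}"
    using t_system_le_card_Union[OF assms(1)] by blast
  then have "finite {t. t_system F t}"
    using finite_subset by blast
  with assms(2) show ?thesis
    unfolding t_fam_def t_system_def[symmetric] by simp
qed

text \<open>Each x \<in> D comes with a member of F contained in S \<union> {x} but not in S, so it must contain x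
and no other element of D.\<close>
lemma card_le_t_fam_if_insert_in_upset:
  assumes "finite (\<Union>F)" "finite D" "D \<inter> S = {}"
    and insert_in: "\<forall>x\<in>D. insert x S \<in> upset F" and S_notin: "S \<notin> upset F"
  shows "card D \<le> t_fam F"
proof -
  obtain h where h: "bij_betw h {1..card D} D"
    using ex_bij_betw_nat_finite_1[OF assms(2)] by blast
  define Fs where "Fs i = (SOME A. A \<in> F \<and> A \<subseteq> insert (h i) S)" for i
  have Fs: "Fs i \<in> F" "Fs i \<subseteq> insert (h i) S" if "i \<in> {1..card D}" for i
  proof -
    have "\<exists>A. A \<in> F \<and> A \<subseteq> insert (h i) S"
      using insert_in bij_betwE[OF h] that unfolding upset_def by blast
    then show "Fs i \<in> F" "Fs i \<subseteq> insert (h i) S"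
      unfolding Fs_def by (metis (mono_tags, lifting) someI_ex)+
  qed
  have "h i \<in> Fs j \<longleftrightarrow> i = j" if "i \<in> {1..card D}" "j \<in> {1..card D}" for i j
  proof
    assume "h i \<in> Fs j"
    moreover have "h i \<notin> S"
      using assms(3) bij_betwE[OF h] that(1) by blast
    ultimately have "h i = h j"
      using Fs(2)[OF that(2)] by blast
    then show "i = j"
      using h that unfolding bij_betw_def inj_on_def by blast
  next
    assume "i = j"
    then show "h i \<in> Fs j"
      using Fs[OF that(1)] S_notin unfolding upset_def by blast
  qed
  with Fs have "t_system F (card D)"
    unfolding t_system_def by blast
  then show ?thesis
    using t_fam_ge[OF assms(1)] by blast
qed

lemma ind_degree_le_rank_fam:
  assumes "finite F" "finite S" "S \<in> upset F"
    and nbrs_out: "\<forall>T\<in>V. cube_adj S T \<longrightarrow> T \<notin> upset F"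
  shows "ind_degree V S \<le> rank_fam F"
proof -
  obtain A where A: "A \<in> F" "A \<subseteq> S"
    using assms(3) unfolding upset_def by blast
  have "{T \<in> V. cube_adj S T} \<subseteq> (\<lambda>x. S - {x}) ` A"
  proof
    fix T assume T: "T \<in> {T \<in> V. cube_adj S T}"
    then have "\<not> A \<subseteq> T"
      using nbrs_out A(1) unfolding upset_def by blast
    with T A(2) show "T \<in> (\<lambda>x. S - {x}) ` A"
      by (auto elim: cube_adj_cases)
  qed
  moreover have "finite A"
    using A(2) assms(2) finite_subset by blast
  ultimately have "ind_degree V S \<le> card A"
    unfolding ind_degree_def by (meson card_image_le card_mono finite_imageI le_trans)
  also have "\<dots> \<le> rank_fam F"
    using rank_fam_ge[OF assms(1) A(1)] .
  finally show ?thesis .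
qed

lemma ind_degree_le_t_fam:
  assumes "finite (\<Union>F)" "V \<subseteq> Pow {1..n}" "S \<notin> upset F"
    and nbrs_in: "\<forall>T\<in>V. cube_adj S T \<longrightarrow> T \<in> upset F"
  shows "ind_degree V S \<le> t_fam F"
proof -
  define D where "D = {x \<in> {1..n} - S. insert x S \<in> upset F}"
  have "{T \<in> V. cube_adj S T} \<subseteq> (\<lambda>x. insert x S) ` D"
  proof
    fix T assume T: "T \<in> {T \<in> V. cube_adj S T}"
    have "T \<in> upset F"
      using T nbrs_in by blast
    then have "\<not> T \<subseteq> S"
      using assms(3) unfolding upset_def by blast
    with T obtain x where "x \<notin> S" "T = insert x S"
      by (auto elim: cube_adj_cases)
    moreover have "x \<in> {1..n}"
      using T assms(2) \<open>T = insert x S\<close> by blast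
    ultimately show "T \<in> (\<lambda>x. insert x S) ` D"
      using \<open>T \<in> upset F\<close> unfolding D_def by blast
  qed
  moreover have "finite D"
    unfolding D_def by simp
  ultimately have "ind_degree V S \<le> card D"
    unfolding ind_degree_def by (meson card_image_le card_mono finite_imageI le_trans)
  also have "\<dots> \<le> t_fam F"
    using card_le_t_fam_if_insert_in_upset[OF assms(1) \<open>finite D\<close> _ _ assms(3)]
    unfolding D_def by blast
  finally show ?thesis .
qed

lemma max_degree_le:
  assumes "finite V" "\<forall>S\<in>V. ind_degree V S \<le> m"
  shows "max_degree V \<le> m"
  using assms unfolding max_degree_def by simp

lemma max_degree_le_if_upset_alternates:
  assumes F: "\<forall>A\<in>F. A \<subseteq> {1..n}" and V: "V \<subseteq> Pow {1..n}"
    and alternates: "\<And>S T. S \<in> V \<Longrightarrow> T \<in> V \<Longrightarrow> cube_adj S T \<Longrightarrow> S \<in> upset F \<longleftrightarrow> T \<notin> upset F"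
  shows "max_degree V \<le> max (rank_fam F) (t_fam F)"
proof (rule max_degree_le)
  have "F \<subseteq> Pow {1..n}"
    using F by blast
  then have fin_F: "finite F" and fin_Union: "finite (\<Union>F)"
    by (auto intro: finite_subset)
  show "finite V"
    using V finite_subset by blast
  show "\<forall>S\<in>V. ind_degree V S \<le> max (rank_fam F) (t_fam F)"
  proof
    fix S assume S: "S \<in> V"
    then have "finite S"
      using V finite_subset by blast
    show "ind_degree V S \<le> max (rank_fam F) (t_fam F)"
    proof (cases "S \<in> upset F")
      case True
      with alternates[OF S] have "ind_degree V S \<le> rank_fam F"
        by (intro ind_degree_le_rank_fam[OF fin_F \<open>finite S\<close>]) blast+
      then show ?thesis by simp
    next
      case False
      with alternates[OF S] have "ind_degree V S \<le> t_fam F"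
        by (intro ind_degree_le_t_fam[OF fin_Union V]) blast+
      then show ?thesis by simp
    qed
  qed
qed

lemma XF_eq: "XF n F = {S \<in> Pow {1..n}. even (card S) \<longleftrightarrow> S \<in> upset F}"
  unfolding XF_def upset_def by auto

lemma Compl_XF_eq: "Pow {1..n} - XF n F = {S \<in> Pow {1..n}. odd (card S) \<longleftrightarrow> S \<in> upset F}"
  unfolding XF_def upset_def by auto

theorem lemma3p2:
  fixes n :: nat and F :: "nat set set"
  assumes "n \<ge> 1"
    and "\<forall>A\<in>F. A \<subseteq> {1..n}"
  shows "max_degree (XF n F) \<le> max (rank_fam F) (t_fam F) \<and>
         max_degree (Pow {1..n} - XF n F) \<le> max (rank_fam F) (t_fam F)"
proof
  have parity_flips: "even (card T) \<longleftrightarrow> odd (card S)"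
    if "S \<subseteq> {1..n}" "cube_adj S T" for S T
    using cube_adj_even_card_iff[OF finite_subset] that by blast
  show "max_degree (XF n F) \<le> max (rank_fam F) (t_fam F)"
    unfolding XF_eq
    by (rule max_degree_le_if_upset_alternates[OF assms(2)]) (use parity_flips in auto)
  show "max_degree (Pow {1..n} - XF n F) \<le> max (rank_fam F) (t_fam F)"
    unfolding Compl_XF_eq
    by (rule max_degree_le_if_upset_alternates[OF assms(2)]) (use parity_flips in auto)
qed

end
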